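(* There is an absolute constant $c>0$ such that for every $n\ge4$ that is a power of $4$ and every positive definite $A\in\mathbb{R}^{n\times n}$, \[\operatorname{Tr}(A)\cdot\max_{1\le i\le n}(v^i)^TA^{-1}v^i\ \ge\ c\,n\lg^2 n,\] where $v^i\in\mathbb{R}^n$ has its first $i$ coordinates equal to $1$ and its last $n-i$ coordinates equal to $0$. Moreover, for every power of $2$, $n\ge4$, the matrix $A$ with $A_{ij}=\lg n-k$ ($k$ the smallest nonnegative integer with $\lfloor (i-1)/2^k\rfloor=\lfloor (j-1)/2^k\rfloor$) satisfies $\operatorname{Tr}(A)\cdot\max_i (v^i)^TA^{-1}v^i\le n\lg^2 n$.
   Context: $\lg$ is the base-2 logarithm. *)

theory Defs
  imports Complex_Main
begin

text \<open>Real n-by-n matrices are represented as functions nat => nat => real,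
  with (0-based) indices ranging over {0..<n}; entries outside are irrelevant.\<close>

definition lg :: "real \<Rightarrow> real" where
  "lg x = log 2 x"

definition mat_trace :: "nat \<Rightarrow> (nat \<Rightarrow> nat \<Rightarrow> real) \<Rightarrow> real" where
  "mat_trace n A = (\<Sum>i<n. A i i)"

definition pos_definite :: "nat \<Rightarrow> (nat \<Rightarrow> nat \<Rightarrow> real) \<Rightarrow> bool" where
  "pos_definite n A \<longleftrightarrow>
     (\<forall>i<n. \<forall>j<n. A i j = A j i) \<and>
     (\<forall>x :: nat \<Rightarrow> real. (\<exists>i<n. x i \<noteq> 0) \<longrightarrow> (\<Sum>i<n. \<Sum>j<n. x i * A i j * x j) > 0)"

definition is_inverse :: "nat \<Rightarrow> (nat \<Rightarrow> nat \<Rightarrow> real) \<Rightarrow> (nat \<Rightarrow> nat \<Rightarrow> real) \<Rightarrow> bool" where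
  "is_inverse n A B \<longleftrightarrow>
     (\<forall>i<n. \<forall>j<n. (\<Sum>k<n. A i k * B k j) = (if i = j then 1 else 0)) \<and>
     (\<forall>i<n. \<forall>j<n. (\<Sum>k<n. B i k * A k j) = (if i = j then 1 else 0))"

definition mat_inv :: "nat \<Rightarrow> (nat \<Rightarrow> nat \<Rightarrow> real) \<Rightarrow> (nat \<Rightarrow> nat \<Rightarrow> real)" where
  "mat_inv n A = (SOME B. is_inverse n A B)"

definition vone :: "nat \<Rightarrow> nat \<Rightarrow> real" where
  "vone i k = (if k < i then 1 else 0)"

definition quad_form :: "nat \<Rightarrow> (nat \<Rightarrow> nat \<Rightarrow> real) \<Rightarrow> (nat \<Rightarrow> real) \<Rightarrow> real" where
  "quad_form n M x = (\<Sum>k<n. \<Sum>l<n. x k * M k l * x l)"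

definition prefix_cost :: "nat \<Rightarrow> (nat \<Rightarrow> nat \<Rightarrow> real) \<Rightarrow> real" where
  "prefix_cost n A = mat_trace n A * Max ((\<lambda>i. quad_form n (mat_inv n A) (vone i)) ` {1..n})"

text \<open>The explicit matrix: with 1-based indices i,j, A_ij = lg n - k, k least with
  floor((i-1)/2^k) = floor((j-1)/2^k). Here i,j are 0-based (i.e. i-1, j-1).\<close>
definition tree_mat :: "nat \<Rightarrow> nat \<Rightarrow> nat \<Rightarrow> real" where
  "tree_mat n i j = lg (real n) - real (LEAST k::nat. i div 2 ^ k = j div 2 ^ k)"

end

theory Submission
  imports Defs "Jordan_Normal_Form.Determinant"
begin

text \<open>
  If B is the inverse of a positive definite A, then
  2 t <y, v> \<le> t^2 y^T A y + v^T B v for all vectors y, v and reals t. Take for y the columns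
  y_j of a matrix Y with Y Y^T = I - J/n and v = v^(j+1), and sum over j: since 1^T A 1 \<ge> 0 the
  quadratic terms add up to at most Tr A, and the left-hand sides to 2 t S, where S is the sum of
  the upper triangle of Y. Optimising t gives S^2 \<le> n Tr(A) max_i (v^i)^T A^-1 v^i. For
  n = 4^L a recursive 4-ary Haar construction of Y has S \<ge> n lg n / 16.

  The tree matrix is the sum, over the levels l < lg n, of the Gram matrices of the
  indicators of the dyadic blocks of size 2^l, and v^i is a signed combination of these indicators
  using at most one block per level below the top and at most two at the top. Whenever
  A = \<Sum>_l C_l C_l^T and v = \<Sum>_l C_l c_l, one has v^T A^-1 v \<le> \<Sum>_l |c_l|^2, which
  is here at most lg n, while Tr A = n lg n.
\<close>

section \<open>Positive definite matrices and their inverses\<close>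

lemma is_inverse_exists_if_injective:
  fixes A :: "nat \<Rightarrow> nat \<Rightarrow> real"
  assumes inj: "\<And>x. \<forall>i<n. (\<Sum>j<n. A i j * x j) = 0 \<Longrightarrow> \<forall>i<n. x i = 0"
  shows "\<exists>B. is_inverse n A B"
proof -
  define A' where "A' = mat n n (\<lambda>(i,j). A i j)"
  have cA: "A' \<in> carrier_mat n n" unfolding A'_def by auto
  have "det A' \<noteq> 0"
  proof
    assume "det A' = 0"
    then obtain v where v: "v \<in> carrier_vec n" "v \<noteq> 0\<^sub>v n" "A' *\<^sub>v v = 0\<^sub>v n"
      using det_0_iff_vec_prod_zero[OF cA] by auto
    have "\<forall>i<n. (\<Sum>j<n. A i j * v $ j) = 0"
    proof (intro allI impI)
      fix i assume i: "i < n"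
      have "(A' *\<^sub>v v) $ i = (\<Sum>j<n. A i j * v $ j)"
        using i v(1) cA unfolding A'_def
        by (simp add: scalar_prod_def row_def lessThan_atLeast0)
      then show "(\<Sum>j<n. A i j * v $ j) = 0" using v(3) i by simp
    qed
    from inj[OF this] have "v = 0\<^sub>v n" using v(1) by (intro eq_vecI) auto
    with v(2) show False by simp
  qed
  from det_non_zero_imp_unit[OF cA this, of undefined]
  obtain B' where B': "B' \<in> carrier_mat n n" "A' * B' = 1\<^sub>m n" "B' * A' = 1\<^sub>m n"
    unfolding Units_def ring_mat_def by auto
  define B where "B i j = B' $$ (i,j)" for i j
  have "is_inverse n A B"
    unfolding is_inverse_def
  proof (intro conjI allI impI)
    fix i j assume i: "i < n" and j: "j < n"
    have "(A' * B') $$ (i,j) = (\<Sum>k<n. A i k * B k j)"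
      using i j B'(1) cA unfolding A'_def B_def
      by (simp add: scalar_prod_def row_def col_def lessThan_atLeast0)
    then show "(\<Sum>k<n. A i k * B k j) = (if i = j then 1 else 0)"
      using B'(2) i j by simp
    have "(B' * A') $$ (i,j) = (\<Sum>k<n. B i k * A k j)"
      using i j B'(1) cA unfolding A'_def B_def
      by (simp add: scalar_prod_def row_def col_def lessThan_atLeast0)
    then show "(\<Sum>k<n. B i k * A k j) = (if i = j then 1 else 0)"
      using B'(3) i j by simp
  qed
  then show ?thesis by blast
qed

lemma pos_definite_is_inverse_mat_inv:
  assumes "pos_definite n A"
  shows "is_inverse n A (mat_inv n A)"
proof -
  have "\<exists>B. is_inverse n A B"
  proof (rule is_inverse_exists_if_injective)
    fix x assume Ax: "\<forall>i<n. (\<Sum>j<n. A i j * x j) = 0"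
    have "(\<Sum>i<n. \<Sum>j<n. x i * A i j * x j) = (\<Sum>i<n. x i * (\<Sum>j<n. A i j * x j))"
      by (simp add: sum_distrib_left mult.assoc)
    also have "\<dots> = 0" using Ax by simp
    finally have "\<not> (\<Sum>i<n. \<Sum>j<n. x i * A i j * x j) > 0" by simp
    then show "\<forall>i<n. x i = 0"
      using assms unfolding pos_definite_def by blast
  qed
  then show ?thesis unfolding mat_inv_def by (rule someI_ex)
qed

lemma is_inverse_apply:
  assumes "is_inverse n A B" and "k < n"
  shows "(\<Sum>l<n. A k l * (\<Sum>m<n. B l m * v m)) = v k"
proof -
  have "(\<Sum>l<n. A k l * (\<Sum>m<n. B l m * v m)) = (\<Sum>l<n. \<Sum>m<n. A k l * B l m * v m)"
    by (simp add: sum_distrib_left mult.assoc)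
  also have "\<dots> = (\<Sum>m<n. (\<Sum>l<n. A k l * B l m) * v m)"
    by (subst sum.swap) (simp add: sum_distrib_right)
  also have "\<dots> = (\<Sum>m<n. if k = m then v m else 0)"
    using assms unfolding is_inverse_def by (intro sum.cong) auto
  also have "\<dots> = v k" using assms(2) by simp
  finally show ?thesis .
qed

lemma quad_form_eq_inner_apply: "quad_form n B v = (\<Sum>k<n. (\<Sum>l<n. B k l * v l) * v k)"
  unfolding quad_form_def
  by (simp add: sum_distrib_left sum_distrib_right mult.commute mult.left_commute)

lemma quad_form_nonneg: "pos_definite n A \<Longrightarrow> 0 \<le> quad_form n A x"
  unfolding pos_definite_def quad_form_def
  by (cases "\<exists>i<n. x i \<noteq> 0") (auto intro: less_imp_le)

lemma pos_definite_diag_pos: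
  assumes pd: "pos_definite n A" and k: "k < n"
  shows "0 < A k k"
proof -
  define e :: "nat \<Rightarrow> real" where "e i = (if i = k then 1 else 0)" for i
  have pw: "e i * A i j * e j = (if i = k then if j = k then A k j else 0 else 0)" for i j
    unfolding e_def by simp
  have "(\<Sum>i<n. \<Sum>j<n. e i * A i j * e j) = (\<Sum>i<n. if i = k then (\<Sum>j<n. if j = k then A k j else 0) else 0)"
    unfolding pw by (intro sum.cong refl) auto
  also have "\<dots> = A k k" using k by simp
  finally have "(\<Sum>i<n. \<Sum>j<n. e i * A i j * e j) = A k k" .
  moreover have "\<exists>i<n. e i \<noteq> 0" using k unfolding e_def by auto
  ultimately show ?thesis using pd unfolding pos_definite_def by auto
qed

lemma mat_trace_pos: "pos_definite n A \<Longrightarrow> 0 < n \<Longrightarrow> 0 < mat_trace n A"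
  unfolding mat_trace_def by (intro sum_pos) (auto intro: pos_definite_diag_pos)

definition bilin_form :: "nat \<Rightarrow> (nat \<Rightarrow> nat \<Rightarrow> real) \<Rightarrow> (nat \<Rightarrow> real) \<Rightarrow> (nat \<Rightarrow> real) \<Rightarrow> real" where
  "bilin_form n A x y = (\<Sum>k<n. \<Sum>l<n. x k * A k l * y l)"

lemma bilin_form_eq_inner_apply: "bilin_form n A x y = (\<Sum>k<n. x k * (\<Sum>l<n. A k l * y l))"
  unfolding bilin_form_def by (simp add: sum_distrib_left mult.assoc)

lemma bilin_form_commute: "\<forall>i<n. \<forall>j<n. A i j = A j i \<Longrightarrow> bilin_form n A x y = bilin_form n A y x"
  unfolding bilin_form_def
  by (subst sum.swap) (auto intro!: sum.cong simp: mult.commute mult.left_commute)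

lemma quad_form_scale_diff:
  "quad_form n A (\<lambda>k. t * y k - w k) =
   t\<^sup>2 * quad_form n A y - t * bilin_form n A y w - t * bilin_form n A w y + quad_form n A w"
  unfolding bilin_form_def quad_form_def
  by (simp add: algebra_simps sum_subtractf sum.distrib sum_distrib_left power2_eq_square)

lemma inverse_quad_form_lower_bound:
  assumes pd: "pos_definite n A" and inv: "is_inverse n A B"
  shows "2 * t * (\<Sum>k<n. y k * v k) \<le> t\<^sup>2 * quad_form n A y + quad_form n B v"
proof -
  define w where "w k = (\<Sum>l<n. B k l * v l)" for k
  have Aw: "(\<Sum>l<n. A k l * w l) = v k" if "k < n" for k
    unfolding w_def using inv that by (rule is_inverse_apply)
  have sym: "\<forall>i<n. \<forall>j<n. A i j = A j i" using pd unfolding pos_definite_def by auto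
  have yw: "bilin_form n A y w = (\<Sum>k<n. y k * v k)"
    unfolding bilin_form_eq_inner_apply using Aw by simp
  have ww: "quad_form n A w = quad_form n B v"
  proof -
    have "quad_form n A w = (\<Sum>k<n. w k * v k)"
      using Aw by (simp add: quad_form_def bilin_form_def[symmetric] bilin_form_eq_inner_apply)
    then show ?thesis unfolding quad_form_eq_inner_apply[of n B] w_def .
  qed
  have "0 \<le> quad_form n A (\<lambda>k. t * y k - w k)" by (rule quad_form_nonneg[OF pd])
  then show ?thesis
    unfolding quad_form_scale_diff bilin_form_commute[OF sym, of w y] yw ww by simp
qed

section \<open>Lower bound\<close>

lemma sq_le_of_quadratic_bound:
  fixes S T N :: real
  assumes "0 < S" "0 < T" and bound: "\<And>t. 0 < t \<Longrightarrow> 2 * t * S \<le> t\<^sup>2 * T + N"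
  shows "S\<^sup>2 \<le> T * N"
proof -
  have "2 * (S / T) * S \<le> (S / T)\<^sup>2 * T + N" using assms by (intro bound) simp
  then show ?thesis using assms(2) by (simp add: power2_eq_square field_simps)
qed

lemma sum_quad_form_columns_le_mat_trace:
  assumes pd: "pos_definite n A"
    and gram: "\<And>k l. k < n \<Longrightarrow> l < n \<Longrightarrow> (\<Sum>j<n. Y k j * Y l j) = (if k = l then 1 else 0) - 1 / n"
  shows "(\<Sum>j<n. quad_form n A (\<lambda>k. Y k j)) \<le> mat_trace n A"
proof -
  have "(\<Sum>j<n. quad_form n A (\<lambda>k. Y k j)) = (\<Sum>k<n. \<Sum>l<n. A k l * (\<Sum>j<n. Y k j * Y l j))"
    unfolding quad_form_def
    by (subst sum.swap, rule sum.cong[OF refl], subst sum.swap) (simp add: sum_distrib_left mult_ac)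
  also have "\<dots> = (\<Sum>k<n. \<Sum>l<n. (if l = k then A k l else 0) - A k l / n)"
    by (intro sum.cong refl) (simp add: gram right_diff_distrib)
  also have "\<dots> = mat_trace n A - quad_form n A (\<lambda>_. 1) / n"
    unfolding mat_trace_def quad_form_def by (simp add: sum_subtractf sum_divide_distrib)
  also have "\<dots> \<le> mat_trace n A"
    using quad_form_nonneg[OF pd] by simp
  finally show ?thesis .
qed

lemma upper_sum_sq_le_prefix_cost:
  assumes pd: "pos_definite n A"
    and gram: "\<And>k l. k < n \<Longrightarrow> l < n \<Longrightarrow> (\<Sum>j<n. Y k j * Y l j) = (if k = l then 1 else 0) - 1 / n"
    and S: "S = (\<Sum>j<n. \<Sum>k<n. if k \<le> j then Y k j else 0)" "0 < S"
  shows "S\<^sup>2 \<le> real n * prefix_cost n A"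
proof -
  define B where "B = mat_inv n A"
  have inv: "is_inverse n A B" unfolding B_def by (rule pos_definite_is_inverse_mat_inv[OF pd])
  define M where "M = Max ((\<lambda>i. quad_form n B (vone i)) ` {1..n})"
  have M: "quad_form n B (vone (Suc j)) \<le> M" if "j < n" for j
    unfolding M_def using that by (intro Max_ge) auto
  have "0 < n" using S by (cases n) auto
  have "S\<^sup>2 \<le> mat_trace n A * (real n * M)"
  proof (rule sq_le_of_quadratic_bound[OF S(2) mat_trace_pos[OF pd \<open>0 < n\<close>]])
    fix t :: real
    have col: "2 * t * (\<Sum>k<n. if k \<le> j then Y k j else 0)
        \<le> t\<^sup>2 * quad_form n A (\<lambda>k. Y k j) + M" if "j < n" for j
    proof -
      have "(\<Sum>k<n. Y k j * vone (Suc j) k) = (\<Sum>k<n. if k \<le> j then Y k j else 0)"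
        unfolding vone_def by (intro sum.cong refl) auto
      then show ?thesis
        using inverse_quad_form_lower_bound[OF pd inv, of t "\<lambda>k. Y k j" "vone (Suc j)"] M[OF that]
        by simp
    qed
    have "2 * t * S \<le> (\<Sum>j<n. t\<^sup>2 * quad_form n A (\<lambda>k. Y k j) + M)"
      unfolding S(1) by (subst sum_distrib_left) (intro sum_mono col; simp)
    also have "\<dots> \<le> t\<^sup>2 * mat_trace n A + real n * M"
      using sum_quad_form_columns_le_mat_trace[OF pd gram]
      by (simp add: sum.distrib sum_distrib_left[symmetric] mult_left_mono)
    finally show "2 * t * S \<le> t\<^sup>2 * mat_trace n A + real n * M" .
  qed
  then show ?thesis unfolding prefix_cost_def M_def B_def by (simp add: mult_ac)
qed

lemma sum_add_mult_add:
  fixes a b :: "'i \<Rightarrow> real"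
  shows "(\<Sum>i\<in>I. (a i + t) * (b i + u)) =
    (\<Sum>i\<in>I. a i * b i) + t * sum b I + u * sum a I + real (card I) * t * u"
  by (simp add: algebra_simps sum.distrib sum_distrib_left)

lemma sum_lessThan_mult:
  fixes f :: "nat \<Rightarrow> 'a::comm_monoid_add"
  shows "(\<Sum>j<c * m. f j) = (\<Sum>q<c. \<Sum>r<m. f (q * m + r))"
  by (simp add: sum.nat_group[symmetric] sum.shift_bounds_nat_ivl[of _ 0, simplified]
      atLeast0LessThan add.commute)

lemma lessThan_mult_decomp:
  assumes "k < c * (m::nat)"
  obtains q r where "q < c" "r < m" "k = q * m + r"
proof
  show "k div m < c" using assms by (simp add: less_mult_imp_div_less)
  show "k mod m < m" using assms by (cases m) auto
qed simp

lemma block_decomp_eq_iff: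
  fixes m :: nat assumes "r < m" "s < m"
  shows "q * m + r = p * m + s \<longleftrightarrow> q = p \<and> r = s"
proof
  assume "q * m + r = p * m + s"
  then have "(q * m + r) div m = (p * m + s) div m" "(q * m + r) mod m = (p * m + s) mod m"
    by simp_all
  then show "q = p \<and> r = s" using assms by simp
qed simp

lemma block_le_iff:
  fixes m :: nat assumes "r < m" "r' < m"
  shows "q * m + r \<le> q' * m + r' \<longleftrightarrow> q < q' \<or> (q = q' \<and> r \<le> r')"
proof -
  have "q * m + r \<le> q' * m + r'" if "q < q'"
    using that mult_le_mono1[of "Suc q" q' m] assms by simp
  moreover have "\<not> q * m + r \<le> q' * m + r'" if "q' < q"
    using that mult_le_mono1[of "Suc q'" q m] assms by simp
  ultimately show ?thesis by (cases q q' rule: linorder_cases) auto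
qed

lemma count_blocks_le:
  "(\<Sum>r'<m. \<Sum>r<m. if q < q' \<or> (q = q' \<and> r \<le> r') then 1 else 0 :: real) =
   (if q < q' then real m * real m else if q = q' then real m * (real m + 1) / 2 else 0)"
proof -
  have "(\<Sum>r<m. if r \<le> r' then 1 else 0 :: real) = real r' + 1" if "r' < m" for r'
  proof -
    have "{r. r < m \<and> r \<le> r'} = {..r'}" using that by auto
    then show ?thesis by (simp add: sum.If_cases Int_def conj_commute)
  qed
  then have "(\<Sum>r'<m. \<Sum>r<m. if r \<le> r' then 1 else 0 :: real) = (\<Sum>r'<m. real r' + 1)"
    by (intro sum.cong) auto
  also have "\<dots> = real m * (real m + 1) / 2"
    by (induction m) (auto simp: field_simps)
  finally show ?thesis by auto
qed

text \<open>P - J/4 for the cyclic shift P of four elements. It has zero row sums,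
  (P - J/4)(P - J/4)^T = I - J/4, and its upper triangle is heavier than its lower one
  because P has three of its four ones above the diagonal.\<close>
definition cyc4 :: "nat \<Rightarrow> nat \<Rightarrow> real" where
  "cyc4 q q' = (if q' = Suc q \<or> (q = 3 \<and> q' = 0) then 1 else 0) - 1/4"

lemma sum_lessThan_four: "(\<Sum>q<4. f q) = f 0 + f 1 + f 2 + f (3::nat)"
  by (simp add: eval_nat_numeral)

lemma less_four_cases: "(q::nat) < 4 \<Longrightarrow> q = 0 \<or> q = 1 \<or> q = 2 \<or> q = 3"
  by auto

lemma cyc4_row_sum: "q < 4 \<Longrightarrow> (\<Sum>q'<4. cyc4 q q') = 0"
  unfolding sum_lessThan_four by (drule less_four_cases) (auto simp: cyc4_def)

lemma cyc4_gram:
  "q < 4 \<Longrightarrow> p < 4 \<Longrightarrow> (\<Sum>q'<4. cyc4 q q' * cyc4 p q') = (if q = p then 1 else 0) - 1/4"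
  unfolding sum_lessThan_four by (drule less_four_cases, drule less_four_cases) (auto simp: cyc4_def)

lemma cyc4_upper_sum:
  "(\<Sum>q'<4. \<Sum>q<4. cyc4 q q' * (if q < q' then x else if q = q' then y else 0)) = 3/2 * x - y"
  unfolding sum_lessThan_four cyc4_def by (simp add: algebra_simps)

text \<open>The 4-ary Haar system: haar4 (L + 1) = I_4 \<otimes> haar4 L + cyc4 \<otimes> J / 4^L.\<close>
fun haar4 :: "nat \<Rightarrow> nat \<Rightarrow> nat \<Rightarrow> real" where
  "haar4 0 k j = 0"
| "haar4 (Suc L) k j =
     (if k div 4^L = j div 4^L then haar4 L (k mod 4^L) (j mod 4^L) else 0)
     + cyc4 (k div 4^L) (j div 4^L) / 4^L"

lemma haar4_Suc_block:
  assumes "r < 4^L" "r' < 4^L"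
  shows "haar4 (Suc L) (q * 4^L + r) (q' * 4^L + r') =
         (if q = q' then haar4 L r r' else 0) + cyc4 q q' / 4^L"
  using assms by simp

lemma haar4_row_sum: "k < 4^L \<Longrightarrow> (\<Sum>j<4^L. haar4 L k j) = 0"
proof (induction L arbitrary: k)
  case 0 then show ?case by simp
next
  case (Suc L)
  define m :: nat where "m = 4^L"
  from Suc.prems obtain q r where qr: "q < 4" "r < m" "k = q * m + r"
    using lessThan_mult_decomp[of k 4 m] unfolding m_def by auto
  have "(\<Sum>j<4^Suc L. haar4 (Suc L) k j)
      = (\<Sum>q'<4. \<Sum>r'<m. (if q = q' then haar4 L r r' else 0) + cyc4 q q' / m)"
    unfolding m_def qr(3) using qr(2)
    by (simp add: sum_lessThan_mult m_def haar4_Suc_block del: haar4.simps)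
  also have "\<dots> = (\<Sum>q'<4. (if q = q' then (\<Sum>r'<m. haar4 L r r') else 0) + cyc4 q q')"
    by (intro sum.cong refl) (simp add: sum.distrib m_def)
  also have "\<dots> = 0"
    using Suc.IH[of r] qr unfolding m_def by (simp add: sum.distrib cyc4_row_sum)
  finally show ?case .
qed

lemma haar4_gram:
  "k < 4^L \<Longrightarrow> l < 4^L \<Longrightarrow>
   (\<Sum>j<4^L. haar4 L k j * haar4 L l j) = (if k = l then 1 else 0) - 1 / 4^L"
proof (induction L arbitrary: k l)
  case 0 then show ?case by simp
next
  case (Suc L)
  define m :: nat where "m = 4^L"
  have m: "0 < m" unfolding m_def by simp
  from Suc.prems obtain q r where qr: "q < 4" "r < m" "k = q * m + r"
    using lessThan_mult_decomp[of k 4 m] unfolding m_def by auto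
  from Suc.prems obtain p s where ps: "p < 4" "s < m" "l = p * m + s"
    using lessThan_mult_decomp[of l 4 m] unfolding m_def by auto
  have row: "(\<Sum>r'<m. haar4 L r r') = 0" "(\<Sum>r'<m. haar4 L s r') = 0"
    using haar4_row_sum qr(2) ps(2) unfolding m_def by blast+
  have "(\<Sum>j<4^Suc L. haar4 (Suc L) k j * haar4 (Suc L) l j) =
        (\<Sum>q'<4. \<Sum>r'<m. ((if q = q' then haar4 L r r' else 0) + cyc4 q q' / m)
                       * ((if p = q' then haar4 L s r' else 0) + cyc4 p q' / m))"
    unfolding m_def qr(3) ps(3) using qr(2) ps(2)
    by (simp add: sum_lessThan_mult m_def haar4_Suc_block del: haar4.simps)
  also have "\<dots> = (\<Sum>q'<4. (if q' = q \<and> p = q then (\<Sum>r'<m. haar4 L r r' * haar4 L s r') else 0)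
                     + cyc4 q q' * cyc4 p q' / m)"
  proof (intro sum.cong refl)
    fix q' :: nat
    show "(\<Sum>r'<m. ((if q = q' then haar4 L r r' else 0) + cyc4 q q' / m)
                       * ((if p = q' then haar4 L s r' else 0) + cyc4 p q' / m)) =
          (if q' = q \<and> p = q then (\<Sum>r'<m. haar4 L r r' * haar4 L s r') else 0) + cyc4 q q' * cyc4 p q' / m"
      unfolding sum_add_mult_add card_lessThan using row m
      by (cases "q = q'"; cases "p = q'") (auto simp: field_simps)
  qed
  also have "\<dots> = (if q = p then (\<Sum>r'<m. haar4 L r r' * haar4 L s r') else 0)
                   + (\<Sum>q'<4. cyc4 q q' * cyc4 p q') / m"
    using qr(1) by (simp add: sum.distrib sum_divide_distrib[symmetric])
  also have "\<dots> = (if q = p then (if r = s then 1 else 0) - 1/m else 0) + ((if q = p then 1 else 0) - 1/4) / m"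
    using Suc.IH[of r s] qr ps cyc4_gram unfolding m_def by simp
  also have "\<dots> = (if k = l then 1 else 0) - 1 / 4^Suc L"
  proof -
    have "k = l \<longleftrightarrow> q = p \<and> r = s"
      unfolding qr(3) ps(3) by (rule block_decomp_eq_iff[OF qr(2) ps(2)])
    then show ?thesis using m unfolding m_def
      by (cases "q = p"; cases "r = s") (simp_all add: field_simps)
  qed
  finally show ?case .
qed


definition haar4_upper_sum :: "nat \<Rightarrow> real" where
  "haar4_upper_sum L = (\<Sum>j<4^L. \<Sum>k<4^L. if k \<le> j then haar4 L k j else 0)"

lemma haar4_upper_sum_Suc: "haar4_upper_sum (Suc L) = 4 * haar4_upper_sum L + (4^L - 1/2)"
proof -
  define m :: nat where "m = 4^L"
  have m: "0 < m" unfolding m_def by simp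
  define U where "U = (\<Sum>r'<m. \<Sum>r<m. if r \<le> r' then haar4 L r r' else 0)"
  let ?le = "\<lambda>q q' r r'. q < q' \<or> (q = q' \<and> r \<le> r')"
  have "haar4_upper_sum (Suc L) = (\<Sum>q'<4. \<Sum>r'<m. \<Sum>q<4. \<Sum>r<m.
          if ?le q q' r r' then (if q = q' then haar4 L r r' else 0) + cyc4 q q' / m else 0)"
    unfolding haar4_upper_sum_def power_Suc m_def[symmetric] sum_lessThan_mult
    by (intro sum.cong refl)
      (simp add: block_le_iff haar4_Suc_block m_def del: haar4.simps)
  also have "\<dots> = (\<Sum>q'<4. \<Sum>q<4. \<Sum>r'<m. \<Sum>r<m.
          if ?le q q' r r' then (if q = q' then haar4 L r r' else 0) + cyc4 q q' / m else 0)"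
    by (rule sum.cong[OF refl], rule sum.swap)
  also have "\<dots> = (\<Sum>q'<4. \<Sum>q<4. (if q = q' then U else 0)
          + cyc4 q q' * (if q < q' then real m else if q = q' then (real m + 1) / 2 else 0))"
  proof (intro sum.cong refl)
    fix q q' :: nat
    have split: "(if c then x + t else 0) = (if c then x else 0) + t * (if c then 1 else (0::real))"
      for c x t by simp
    have "(\<Sum>r'<m. \<Sum>r<m. if ?le q q' r r' then (if q = q' then haar4 L r r' else 0) else 0)
        = (if q = q' then U else 0)"
      unfolding U_def by (cases "q = q'") (auto cong: if_cong)
    then show "(\<Sum>r'<m. \<Sum>r<m.
          if ?le q q' r r' then (if q = q' then haar4 L r r' else 0) + cyc4 q q' / m else 0)
        = (if q = q' then U else 0)
          + cyc4 q q' * (if q < q' then real m else if q = q' then (real m + 1) / 2 else 0)"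
      unfolding split sum.distrib sum_distrib_left[symmetric] count_blocks_le using m by auto
  qed
  also have "\<dots> = 4 * U + (4^L - 1/2)"
    by (simp add: sum.distrib cyc4_upper_sum m_def field_simps)
  finally show ?thesis unfolding U_def m_def haar4_upper_sum_def .
qed

lemma haar4_upper_sum_ge: "real L * 4^L / 8 \<le> haar4_upper_sum L"
proof (induction L)
  case 0 then show ?case by (simp add: haar4_upper_sum_def)
next
  case (Suc L)
  have "real (Suc L) * 4^Suc L / 8 = 4 * (real L * 4^L / 8) + 4^L/2"
    by (simp add: field_simps)
  moreover have "(1::real) \<le> 4^L" by simp
  ultimately show ?case using Suc unfolding haar4_upper_sum_Suc by linarith
qed

lemma lg_four_power: "lg (4^L) = 2 * real L"
proof -
  have "(4::real)^L = 2^(2*L)" by (simp add: power_mult)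
  then show ?thesis unfolding lg_def by (simp add: log_nat_power)
qed

lemma prefix_cost_ge_four_power:
  assumes n: "n = 4^L" and L: "1 \<le> L" and pd: "pos_definite n A"
  shows "real n * (lg (real n))\<^sup>2 / 256 \<le> prefix_cost n A"
proof -
  define S where "S = haar4_upper_sum L"
  have S: "real L * real n / 8 \<le> S" unfolding S_def n using haar4_upper_sum_ge[of L] by simp
  have "0 < real L * real n / 8" using L n by simp
  have "real n * (lg (real n))\<^sup>2 / 256 = (real L * real n / 8)\<^sup>2 / real n"
    using n by (simp add: lg_four_power power2_eq_square field_simps)
  also have "\<dots> \<le> S\<^sup>2 / real n"
    using S \<open>0 < real L * real n / 8\<close> by (intro divide_right_mono power_mono) auto
  also have "\<dots> \<le> prefix_cost n A"
  proof -
    have "S\<^sup>2 \<le> real n * prefix_cost n A"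
      using S \<open>0 < real L * real n / 8\<close> pd haar4_gram[of _ L] unfolding n S_def haar4_upper_sum_def
      by (intro upper_sum_sq_le_prefix_cost) auto
    then show ?thesis using n by (simp add: field_simps)
  qed
  finally show ?thesis .
qed

section \<open>Upper bound\<close>

lemma bilin_form_sum_gram:
  assumes "\<And>k j. k < n \<Longrightarrow> j < n \<Longrightarrow> A k j = (\<Sum>l<L. \<Sum>b<m. C l k b * C l j b)"
  shows "bilin_form n A x y =
     (\<Sum>l<L. \<Sum>b<m. (\<Sum>k<n. C l k b * x k) * (\<Sum>j<n. C l j b * y j))"
proof -
  let ?f = "\<lambda>k j l b. x k * C l k b * C l j b * y j"
  have "bilin_form n A x y = (\<Sum>k<n. \<Sum>j<n. \<Sum>l<L. \<Sum>b<m. ?f k j l b)"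
    unfolding bilin_form_def using assms
    by (intro sum.cong refl) (simp add: sum_distrib_left sum_distrib_right mult_ac)
  also have "\<dots> = (\<Sum>k<n. \<Sum>l<L. \<Sum>j<n. \<Sum>b<m. ?f k j l b)"
    by (rule sum.cong[OF refl], rule sum.swap)
  also have "\<dots> = (\<Sum>k<n. \<Sum>l<L. \<Sum>b<m. \<Sum>j<n. ?f k j l b)"
    by (rule sum.cong[OF refl], rule sum.cong[OF refl], rule sum.swap)
  also have "\<dots> = (\<Sum>l<L. \<Sum>k<n. \<Sum>b<m. \<Sum>j<n. ?f k j l b)"
    by (rule sum.swap)
  also have "\<dots> = (\<Sum>l<L. \<Sum>b<m. \<Sum>k<n. \<Sum>j<n. ?f k j l b)"
    by (rule sum.cong[OF refl], rule sum.swap)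
  also have "\<dots> = (\<Sum>l<L. \<Sum>b<m. (\<Sum>k<n. C l k b * x k) * (\<Sum>j<n. C l j b * y j))"
    by (simp add: sum_product mult_ac)
  finally show ?thesis .
qed

text \<open>With y = C^T A^-1 v, the form v^T A^-1 v equals both \<langle>c, y\<rangle> and |y|^2, so it is
  at most |c|^2 by Cauchy--Schwarz.\<close>
lemma inverse_quad_form_le_of_factor:
  assumes inv: "is_inverse n A B"
    and A: "\<And>k j. k < n \<Longrightarrow> j < n \<Longrightarrow> A k j = (\<Sum>l<L. \<Sum>b<m. C l k b * C l j b)"
    and v: "\<And>k. k < n \<Longrightarrow> v k = (\<Sum>l<L. \<Sum>b<m. C l k b * c l b)"
  shows "quad_form n B v \<le> (\<Sum>l<L. \<Sum>b<m. (c l b)\<^sup>2)"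
proof -
  define x where "x k = (\<Sum>l<n. B k l * v l)" for k
  define y where "y l b = (\<Sum>k<n. C l k b * x k)" for l b
  have Ax: "(\<Sum>j<n. A k j * x j) = v k" if "k < n" for k
    unfolding x_def using inv that by (rule is_inverse_apply)
  have Q: "quad_form n B v = (\<Sum>k<n. x k * v k)"
    unfolding quad_form_eq_inner_apply x_def by (simp add: mult.commute)
  have cy: "quad_form n B v = (\<Sum>l<L. \<Sum>b<m. c l b * y l b)"
  proof -
    have "(\<Sum>k<n. x k * v k) = (\<Sum>k<n. \<Sum>l<L. \<Sum>b<m. x k * C l k b * c l b)"
      using v by (intro sum.cong refl) (simp add: sum_distrib_left mult_ac)
    also have "\<dots> = (\<Sum>l<L. \<Sum>k<n. \<Sum>b<m. x k * C l k b * c l b)"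
      by (rule sum.swap)
    also have "\<dots> = (\<Sum>l<L. \<Sum>b<m. \<Sum>k<n. x k * C l k b * c l b)"
      by (rule sum.cong[OF refl], rule sum.swap)
    finally show ?thesis
      unfolding Q y_def by (simp add: sum_distrib_left mult_ac)
  qed
  have yy: "quad_form n B v = (\<Sum>l<L. \<Sum>b<m. (y l b)\<^sup>2)"
  proof -
    have "(\<Sum>k<n. x k * v k) = bilin_form n A x x"
      unfolding bilin_form_eq_inner_apply using Ax by simp
    then show ?thesis
      using bilin_form_sum_gram[OF A, where x = x and y = x] unfolding Q y_def by (simp add: power2_eq_square)
  qed
  have "2 * quad_form n B v \<le> (\<Sum>l<L. \<Sum>b<m. (c l b)\<^sup>2) + (\<Sum>l<L. \<Sum>b<m. (y l b)\<^sup>2)"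
    unfolding cy sum_distrib_left sum.distrib[symmetric]
    by (intro sum_mono) (metis sum_squares_bound mult.assoc)
  then show ?thesis using yy by simp
qed

text \<open>Indicator of the dyadic blocks of level l: row k, column b. Only the columns b < n / 2^l
  are nonzero, but indexing all of them by b < n keeps the sums uniform.\<close>
definition block_ind :: "nat \<Rightarrow> nat \<Rightarrow> nat \<Rightarrow> real" where
  "block_ind l k b = (if k div 2^l = b then 1 else 0)"

lemma div_two_power_eq_mono:
  assumes "k div 2^a = j div (2::nat)^a" "a \<le> c"
  shows "k div 2^c = j div 2^c"
proof -
  have "(2::nat)^c = 2^a * 2^(c - a)" using assms(2) by (simp flip: power_add)
  then show ?thesis using assms(1) by (metis div_mult2_eq)
qed

lemma tree_mat_eq_count_levels:
  assumes n: "n = 2^L" and "k < n" "j < n"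
  shows "tree_mat n k j = (\<Sum>l<L. if k div 2^l = j div 2^l then 1 else 0)"
proof -
  define k0 where "k0 = (LEAST t::nat. k div 2^t = j div 2^t)"
  have top: "k div 2^L = j div 2^L" using assms by simp
  have k0: "k div 2^l = j div 2^l \<longleftrightarrow> k0 \<le> l" for l
  proof
    assume "k div 2^l = j div 2^l" then show "k0 \<le> l" unfolding k0_def by (rule Least_le)
  next
    have "k div 2^k0 = j div 2^k0" unfolding k0_def by (rule LeastI) (rule top)
    then show "k0 \<le> l \<Longrightarrow> k div 2^l = j div 2^l" by (rule div_two_power_eq_mono)
  qed
  have "k0 \<le> L" using k0 top by blast
  have "{l. l < L \<and> k0 \<le> l} = {k0..<L}" by auto
  then have "(\<Sum>l<L. if k div 2^l = j div 2^l then 1 else 0) = real L - real k0"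
    using \<open>k0 \<le> L\<close> unfolding k0 by (simp add: sum.If_cases Int_def conj_commute)
  moreover have "lg (real n) = real L" unfolding n lg_def by (simp add: log_nat_power)
  ultimately show ?thesis unfolding tree_mat_def k0_def by simp
qed

lemma sum_block_ind_mult:
  assumes "k < n"
  shows "(\<Sum>b<n. block_ind l k b * f b) = f (k div 2^l)"
proof -
  have "k div 2^l < n" using assms by (meson div_le_dividend le_less_trans)
  moreover have "(\<Sum>b<n. block_ind l k b * f b) = (\<Sum>b<n. if b = k div 2^l then f (k div 2^l) else 0)"
    unfolding block_ind_def by (intro sum.cong) auto
  ultimately show ?thesis by simp
qed

lemma tree_mat_eq_block_gram:
  assumes n: "n = 2^L" and k: "k < n" and j: "j < n"
  shows "tree_mat n k j = (\<Sum>l<L. \<Sum>b<n. block_ind l k b * block_ind l j b)"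
  unfolding tree_mat_eq_count_levels[OF assms] sum_block_ind_mult[OF k]
  by (simp add: block_ind_def eq_commute)

lemma tree_mat_pos_definite:
  assumes n: "n = 2^L" and L: "1 \<le> L"
  shows "pos_definite n (tree_mat n)"
  unfolding pos_definite_def
proof (intro conjI allI impI)
  fix i j assume "i < n" "j < n"
  then show "tree_mat n i j = tree_mat n j i"
    using tree_mat_eq_block_gram[OF n] by (simp add: mult.commute)
next
  fix x :: "nat \<Rightarrow> real" assume "\<exists>i<n. x i \<noteq> 0"
  then obtain i where i: "i < n" "x i \<noteq> 0" by auto
  define y where "y l b = (\<Sum>k<n. block_ind l k b * x k)" for l b
  have level0: "y 0 b = x b" if "b < n" for b
  proof -
    have "y 0 b = (\<Sum>k<n. if k = b then x b else 0)"
      unfolding y_def block_ind_def by (intro sum.cong) auto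
    then show ?thesis using that by simp
  qed
  have "0 < (y 0 i)\<^sup>2" using i level0 by simp
  also have "\<dots> \<le> (\<Sum>b<n. (y 0 b)\<^sup>2)" using i by (intro member_le_sum) auto
  also have "\<dots> \<le> (\<Sum>l<L. \<Sum>b<n. (y l b)\<^sup>2)"
    using L by (intro member_le_sum[of 0] sum_nonneg) auto
  also have "\<dots> = bilin_form n (tree_mat n) x x"
    using bilin_form_sum_gram[OF tree_mat_eq_block_gram[OF n], where x = x and y = x]
    unfolding y_def by (simp add: power2_eq_square)
  finally show "0 < (\<Sum>i<n. \<Sum>j<n. x i * tree_mat n i j * x j)"
    unfolding bilin_form_def .
qed

lemma mat_trace_tree_mat: "n = 2^L \<Longrightarrow> mat_trace n (tree_mat n) = real n * real L"
  unfolding mat_trace_def by (simp add: tree_mat_eq_count_levels)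

text \<open>The coefficient of block b of level l in v^i: the block lies in the prefix {..<i} but, below
  the top level, its parent does not. The coefficients telescope over the levels.\<close>
definition prefix_coeff :: "nat \<Rightarrow> nat \<Rightarrow> nat \<Rightarrow> nat \<Rightarrow> real" where
  "prefix_coeff L i l b = (if b < i div 2^l then 1 else 0)
     - (if Suc l = L then 0 else if b div 2 < i div 2^Suc l then 1 else 0)"

lemma div_two_power_div_two: "(k::nat) div 2^l div 2 = k div 2^Suc l"
  by (simp add: div_mult2_eq[symmetric] power_Suc2 mult.commute)

lemma vone_eq_block_sum:
  assumes L: "1 \<le> L" and k: "k < n"
  shows "vone i k = (\<Sum>l<L. \<Sum>b<n. block_ind l k b * prefix_coeff L i l b)"
proof -
  define w where "w l = (if k div 2^l < i div 2^l then 1 else 0 :: real)" for l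
  have level: "(\<Sum>b<n. block_ind l k b * prefix_coeff L i l b) = w l - (if Suc l = L then 0 else w (Suc l))"
    for l
    unfolding sum_block_ind_mult[OF k] prefix_coeff_def w_def div_two_power_div_two by simp
  obtain L' where L': "L = Suc L'" using L by (cases L) auto
  have "(\<Sum>l<L. \<Sum>b<n. block_ind l k b * prefix_coeff L i l b)
      = (\<Sum>l<L. w l - (if Suc l = L then 0 else w (Suc l)))"
    unfolding level ..
  also have "\<dots> = (\<Sum>l<L'. w l - w (Suc l)) + w L'"
    unfolding L' by simp
  also have "\<dots> = w 0" by (simp add: sum_lessThan_telescope')
  finally show ?thesis unfolding vone_def w_def by simp
qed

lemma sum_indicator_atLeastLessThan:
  "a \<le> n \<Longrightarrow> (\<Sum>b<n. if m \<le> b \<and> b < a then 1 else 0 :: real) = real (a - m)"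
proof -
  assume "a \<le> n"
  then have "{b. b < n \<and> m \<le> b \<and> b < a} = {m..<a}" by auto
  then show ?thesis by (simp add: sum.If_cases Int_def conj_commute)
qed

lemma prefix_coeff_level_norm_le:
  assumes "Suc l \<noteq> L" and "i \<le> n"
  shows "(\<Sum>b<n. (prefix_coeff L i l b)\<^sup>2) \<le> real (i div 2^l mod 2)"
proof -
  define a where "a = i div 2^l"
  have "a \<le> n" unfolding a_def using assms(2) by (meson div_le_dividend le_trans)
  have "(prefix_coeff L i l b)\<^sup>2 \<le> (if 2 * (a div 2) \<le> b \<and> b < a then 1 else 0)" for b
  proof -
    have "prefix_coeff L i l b = (if b < a then 1 else 0) - (if b div 2 < a div 2 then 1 else 0)"
      unfolding prefix_coeff_def a_def using assms(1) div_two_power_div_two[of i l] by simp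
    moreover have "b < a" if "b div 2 < a div 2"
      using that by (meson div_le_mono le_less_trans not_le)
    ultimately show ?thesis by auto
  qed
  then have "(\<Sum>b<n. (prefix_coeff L i l b)\<^sup>2) \<le> (\<Sum>b<n. if 2 * (a div 2) \<le> b \<and> b < a then 1 else 0)"
    by (intro sum_mono)
  also have "\<dots> = real (a mod 2)"
    using sum_indicator_atLeastLessThan[OF \<open>a \<le> n\<close>] by (simp add: minus_mult_div_eq_mod)
  finally show ?thesis unfolding a_def .
qed

lemma prefix_coeff_top_level_norm:
  assumes "Suc l = L" and "i \<le> n"
  shows "(\<Sum>b<n. (prefix_coeff L i l b)\<^sup>2) = real (i div 2^l)"
proof -
  have "i div 2^l \<le> n" using assms(2) by (meson div_le_dividend le_trans)
  moreover have "(prefix_coeff L i l b)\<^sup>2 = (if 0 \<le> b \<and> b < i div 2^l then 1 else 0)" for b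
    unfolding prefix_coeff_def using assms(1) by simp
  ultimately show ?thesis using sum_indicator_atLeastLessThan[of "i div 2^l" n 0] by simp
qed

lemma prefix_coeff_norm_le:
  assumes n: "n = 2^L" and L: "2 \<le> L" and i: "i \<le> n"
  shows "(\<Sum>l<L. \<Sum>b<n. (prefix_coeff L i l b)\<^sup>2) \<le> real L"
proof -
  obtain L' where L': "L = Suc L'" using L by (cases L) auto
  have "(\<Sum>l<L. \<Sum>b<n. (prefix_coeff L i l b)\<^sup>2)
      \<le> (\<Sum>l<L'. real (i div 2^l mod 2)) + real (i div 2^L')"
    unfolding L' using i L' prefix_coeff_top_level_norm[of L' L i n]
    by (simp del: of_nat_add) (intro sum_mono prefix_coeff_level_norm_le; simp)
  also have "\<dots> \<le> real L"
  proof (cases "i = n")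
    case True
    have "i div 2^l mod 2 = 0" if "l < L'" for l
    proof -
      have "i div 2^l = 2^(L - l)" unfolding True n using that L' by (simp add: power_diff)
      moreover have "L - l = Suc (L - Suc l)" using that L' by simp
      ultimately show ?thesis by simp
    qed
    moreover have "i div 2^L' = 2" unfolding True n L' by simp
    ultimately show ?thesis using L by simp
  next
    case False
    then have "i div 2^L' \<le> 1"
      using i n L' by (simp add: less_mult_imp_div_less less_Suc_eq_le[symmetric])
    moreover have "(\<Sum>l<L'. real (i div 2^l mod 2)) \<le> (\<Sum>l<L'. 1)"
      by (intro sum_mono) simp
    ultimately show ?thesis unfolding L' by simp
  qed
  finally show ?thesis .
qed

lemma tree_mat_prefix_cost_le:
  assumes n: "n = 2^L" and L: "2 \<le> L"
  shows "prefix_cost n (tree_mat n) \<le> real n * (lg (real n))\<^sup>2"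
proof -
  define B where "B = mat_inv n (tree_mat n)"
  have inv: "is_inverse n (tree_mat n) B"
    unfolding B_def using L by (intro pos_definite_is_inverse_mat_inv tree_mat_pos_definite[OF n]) simp
  have "quad_form n B (vone i) \<le> real L" if "i \<in> {1..n}" for i
  proof -
    have "quad_form n B (vone i) \<le> (\<Sum>l<L. \<Sum>b<n. (prefix_coeff L i l b)\<^sup>2)"
      using L by (intro inverse_quad_form_le_of_factor[OF inv tree_mat_eq_block_gram[OF n]]
          vone_eq_block_sum) simp_all
    also have "\<dots> \<le> real L" using that by (intro prefix_coeff_norm_le[OF n L]) simp
    finally show ?thesis .
  qed
  then have "Max ((\<lambda>i. quad_form n B (vone i)) ` {1..n}) \<le> real L"
    using n by (subst Max_le_iff) auto
  moreover have "lg (real n) = real L" unfolding n lg_def by (simp add: log_nat_power)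
  ultimately show ?thesis
    unfolding prefix_cost_def mat_trace_tree_mat[OF n] B_def[symmetric]
    by (simp add: power2_eq_square mult.assoc mult_left_mono)
qed

theorem corollary3p3:
  shows "(\<exists>c>0. \<forall>n::nat. \<forall>A :: nat \<Rightarrow> nat \<Rightarrow> real.
            (\<exists>m::nat. n = 4 ^ m) \<longrightarrow> n \<ge> 4 \<longrightarrow> pos_definite n A \<longrightarrow>
            prefix_cost n A \<ge> c * real n * (lg (real n))\<^sup>2)
       \<and> (\<forall>n::nat. (\<exists>m::nat. n = 2 ^ m) \<longrightarrow> n \<ge> 4 \<longrightarrow>
            prefix_cost n (tree_mat n) \<le> real n * (lg (real n))\<^sup>2)"
proof (intro conjI)
  show "\<exists>c>0. \<forall>n::nat. \<forall>A :: nat \<Rightarrow> nat \<Rightarrow> real.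
            (\<exists>m::nat. n = 4 ^ m) \<longrightarrow> n \<ge> 4 \<longrightarrow> pos_definite n A \<longrightarrow>
            prefix_cost n A \<ge> c * real n * (lg (real n))\<^sup>2"
  proof (intro exI[of _ "1/256"] conjI allI impI)
    fix n :: nat and A :: "nat \<Rightarrow> nat \<Rightarrow> real"
    assume "\<exists>m::nat. n = 4 ^ m" "n \<ge> 4" "pos_definite n A"
    moreover from this obtain m where "n = 4^m" by blast
    moreover from calculation have "1 \<le> m" by (cases m) auto
    ultimately show "prefix_cost n A \<ge> 1/256 * real n * (lg (real n))\<^sup>2"
      using prefix_cost_ge_four_power by simp
  qed simp
next
  show "\<forall>n::nat. (\<exists>m::nat. n = 2 ^ m) \<longrightarrow> n \<ge> 4 \<longrightarrow>
            prefix_cost n (tree_mat n) \<le> real n * (lg (real n))\<^sup>2"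
  proof (intro allI impI)
    fix n :: nat
    assume "\<exists>m::nat. n = 2 ^ m" "n \<ge> 4"
    then obtain m where "n = 2^m" by blast
    moreover have "2 \<le> m"
      using \<open>n \<ge> 4\<close> \<open>n = 2^m\<close> power_le_imp_le_exp[of "2::nat" 2 m] by simp
    ultimately show "prefix_cost n (tree_mat n) \<le> real n * (lg (real n))\<^sup>2"
      by (intro tree_mat_prefix_cost_le)
  qed
qed

end
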